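(* Let $d\ge1$ be odd. In $\mathbb Q[l_1,l_2]$ (with $c_1=-(l_1+l_2)$, $c_2=l_1l_2$) the following identities hold: $$P_d=\Big(d^2c_2-\tfrac{d^2-1}{4}c_1^2\Big)P_{d-2},\quad R_{0,0}=\tfrac{d+1}{2}c_1\,P_{d-2},\quad R_{0,1}=-d\,P_{d-2},\quad R_{1,0}=d\,c_2\,P_{d-2},\quad R_{1,1}=\tfrac{1-d}{2}c_1\,P_{d-2}.$$
   Context: For $n\ge0$ let $P_{0,n}(X)=\prod_{j=0}^{n}\big(X+(n-j)l_1+jl_2\big)\in\mathbb Z[l_1,l_2][X]$, and set $P_{0,-1}:=1$. Put $c_1=-(l_1+l_2)$, $c_2=l_1l_2$, $P_d:=P_{0,d}\big(\tfrac{d+1}{2}c_1\big)$ and $P_{d-2}:=P_{0,d-2}\big(\tfrac{d-1}{2}c_1\big)$ (so $P_{-1}=1$). For $k=0,1$, divide $h^k\,P_{0,d-1}(H-h)\in\mathbb Z[l_1,l_2][H,h]$ by the monic polynomial $h^2-c_1h+c_2$ in $h$, obtaining the remainder $R_{k,0}(H)+R_{k,1}(H)\,h$ with $R_{k,j}(H)\in\mathbb Z[l_1,l_2][H]$; then define $R_{k,j}:=R_{k,j}\big(\tfrac{d+1}{2}c_1\big)$. *)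

theory Defs
  imports "HOL-Computational_Algebra.Polynomial"
begin

definition P0 :: "'a::comm_ring_1 \<Rightarrow> 'a \<Rightarrow> int \<Rightarrow> 'a \<Rightarrow> 'a" where
  "P0 l1 l2 n X = (if n < 0 then 1
     else (\<Prod>j\<in>{0..nat n}. X + of_int (n - int j) * l1 + of_nat j * l2))"

definition c1 :: "'a::comm_ring_1 \<Rightarrow> 'a \<Rightarrow> 'a" where
  "c1 l1 l2 = - (l1 + l2)"

definition c2 :: "'a::comm_ring_1 \<Rightarrow> 'a \<Rightarrow> 'a" where
  "c2 l1 l2 = l1 * l2"

text \<open>R_{k,j}(H): coefficient of h^j in the remainder of h^k * P_{0,d-1}(H - h) upon division
  by the monic polynomial h^2 - c1 h + c2 in the variable h, for a given value of H.\<close>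
definition Rkj :: "'a::field \<Rightarrow> 'a \<Rightarrow> nat \<Rightarrow> nat \<Rightarrow> nat \<Rightarrow> 'a \<Rightarrow> 'a" where
  "Rkj l1 l2 d k j H =
     coeff ((monom 1 k * P0 [:l1:] [:l2:] (int d - 1) [:H, -1:])
            mod [:c2 l1 l2, - c1 l1 l2, 1:]) j"

end

theory Submission
  imports Defs
begin

text \<open>Write d = 2m + 1, so that the evaluation point is H = (m + 1) c1. Splitting off the two
  extreme factors gives P_{0,n+2}(X) = (X + (n+2) l1)(X + (n+2) l2) P_{0,n}(X + l1 + l2), and
  X + l1 + l2 = X - c1 moves the point (m + 1) c1 to m c1. Hence P_d is P_{d-2} times the product
  of the two extreme factors, which equals d^2 c2 - (d^2 - 1)/4 c1^2.
  The same recursion applied to P_{0,d-1}(H - h) as a polynomial in h shows, by induction on m,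
  that P_{0,d-1}(H - h) is congruent to P_{d-2} (H - d h) modulo h^2 - c1 h + c2; the induction
  step is one quadratic identity in h. Multiplying by h and reducing with h^2 = c1 h - c2 gives
  the remainders for k = 1.\<close>

lemma mod_eq_of_dvd_diff:
  fixes p q r :: "'a::field poly"
  assumes "q dvd p - r" and "degree r < degree q"
  shows "p mod q = r"
proof -
  have "p mod q = r mod q" using assms(1) by (simp add: mod_eq_dvd_iff)
  also have "\<dots> = r" using assms(2) by (rule mod_poly_less)
  finally show ?thesis .
qed

lemma P0_add_two:
  fixes l1 l2 X :: "'a::comm_ring_1"
  assumes "n \<ge> -1"
  shows "P0 l1 l2 (n + 2) X
    = (X + of_int (n + 2) * l1) * (X + of_int (n + 2) * l2) * P0 l1 l2 n (X + l1 + l2)"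
proof (cases "n = -1")
  case True
  have "P0 l1 l2 1 X = (X + l1) * (X + l2)"
    by (simp add: P0_def atLeast0_atMost_Suc algebra_simps)
  moreover have "P0 l1 l2 (-1) Y = 1" for Y
    by (simp add: P0_def)
  ultimately show ?thesis by (simp add: True)
next
  case False
  with assms have "n \<ge> 0" by simp
  then obtain k where n: "n = int k" using nonneg_int_cases by blast
  define f where "f j = X + of_int (int k + 2 - int j) * l1 + of_nat j * l2" for j
  have "P0 l1 l2 (n + 2) X = (\<Prod>j\<in>{0..Suc (Suc k)}. f j)"
    by (simp add: n P0_def f_def nat_add_distrib)
  also have "\<dots> = f 0 * (\<Prod>j\<in>{0..k}. f (Suc j)) * f (Suc (Suc k))"
    by (subst prod.atLeast0_atMost_Suc, subst prod.atLeast0_atMost_Suc_shift) (simp add: comp_def)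
  also have "(\<Prod>j\<in>{0..k}. f (Suc j)) = P0 l1 l2 n (X + l1 + l2)"
    unfolding n P0_def f_def by (auto intro!: prod.cong simp: algebra_simps)
  finally show ?thesis by (simp add: n f_def algebra_simps)
qed

text \<open>With d = 2m + 1, \<open>P_centre m\<close> is P_{d-2} and \<open>centre_factor m\<close> is
  d^2 c2 - (d^2 - 1)/4 c1^2.\<close>

definition P_centre :: "'a::comm_ring_1 \<Rightarrow> 'a \<Rightarrow> nat \<Rightarrow> 'a" where
  "P_centre l1 l2 m = P0 l1 l2 (int (2*m) - 1) (of_nat m * c1 l1 l2)"

definition centre_factor :: "'a::comm_ring_1 \<Rightarrow> 'a \<Rightarrow> nat \<Rightarrow> 'a" where
  "centre_factor l1 l2 m = of_nat ((2*m+1)^2) * c2 l1 l2 - of_nat (m*(m+1)) * (c1 l1 l2)^2"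

lemma P_centre_Suc:
  fixes l1 l2 :: "'a::comm_ring_1"
  shows "P_centre l1 l2 (Suc m) = centre_factor l1 l2 m * P_centre l1 l2 m"
proof -
  have "P_centre l1 l2 (Suc m) = P0 l1 l2 ((int (2*m) - 1) + 2) (of_nat (Suc m) * c1 l1 l2)"
    by (simp add: P_centre_def)
  also have "\<dots> = (of_nat (Suc m) * c1 l1 l2 + of_nat (2*m+1) * l1)
      * (of_nat (Suc m) * c1 l1 l2 + of_nat (2*m+1) * l2)
      * P0 l1 l2 (int (2*m) - 1) (of_nat (Suc m) * c1 l1 l2 + l1 + l2)"
    by (subst P0_add_two) simp_all
  also have "of_nat (Suc m) * c1 l1 l2 + l1 + l2 = of_nat m * c1 l1 l2"
    by (simp add: c1_def algebra_simps)
  also have "(of_nat (Suc m) * c1 l1 l2 + of_nat (2*m+1) * l1)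
      * (of_nat (Suc m) * c1 l1 l2 + of_nat (2*m+1) * l2) = centre_factor l1 l2 m"
    by (simp add: centre_factor_def c1_def c2_def algebra_simps power2_eq_square)
  finally show ?thesis by (simp add: P_centre_def)
qed

text \<open>In the variable h, with d = 2m + 1 and H = (m + 1) c1: \<open>quad_divisor\<close> is h^2 - c1 h + c2,
  \<open>shifted_P0 m\<close> is P_{0,d-1}(H - h) and \<open>linear_rem m\<close> is H - d h.\<close>

definition quad_divisor :: "'a::comm_ring_1 \<Rightarrow> 'a \<Rightarrow> 'a poly" where
  "quad_divisor l1 l2 = [:c2 l1 l2, - c1 l1 l2, 1:]"

definition shifted_P0 :: "'a::comm_ring_1 \<Rightarrow> 'a \<Rightarrow> nat \<Rightarrow> 'a poly" where
  "shifted_P0 l1 l2 m = P0 [:l1:] [:l2:] (int (2*m)) [:of_nat (m+1) * c1 l1 l2, -1:]"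

definition linear_rem :: "'a::comm_ring_1 \<Rightarrow> 'a \<Rightarrow> nat \<Rightarrow> 'a poly" where
  "linear_rem l1 l2 m = [:of_nat (m+1) * c1 l1 l2, - of_nat (2*m+1):]"

lemma shifted_P0_Suc:
  fixes l1 l2 :: "'a::comm_ring_1"
  shows "shifted_P0 l1 l2 (Suc m)
    = ([:of_nat (m+2) * c1 l1 l2, -1:] + of_nat (2*m+2) * [:l1:])
      * ([:of_nat (m+2) * c1 l1 l2, -1:] + of_nat (2*m+2) * [:l2:]) * shifted_P0 l1 l2 m"
proof -
  have "shifted_P0 l1 l2 (Suc m) = P0 [:l1:] [:l2:] (int (2*m) + 2) [:of_nat (m+2) * c1 l1 l2, -1:]"
    by (simp add: shifted_P0_def ac_simps)
  also have "\<dots> = ([:of_nat (m+2) * c1 l1 l2, -1:] + of_nat (2*m+2) * [:l1:])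
      * ([:of_nat (m+2) * c1 l1 l2, -1:] + of_nat (2*m+2) * [:l2:])
      * P0 [:l1:] [:l2:] (int (2*m)) ([:of_nat (m+2) * c1 l1 l2, -1:] + [:l1:] + [:l2:])"
    by (subst P0_add_two) (simp_all add: ac_simps)
  also have "[:of_nat (m+2) * c1 l1 l2, -1:] + [:l1:] + [:l2:] = [:of_nat (m+1) * c1 l1 l2, -1:]"
    by (simp add: c1_def algebra_simps)
  finally show ?thesis by (simp add: shifted_P0_def)
qed

lemma linear_rem_Suc_congruence:
  fixes l1 l2 :: "'a::{idom,ring_char_0}"
  shows "([:of_nat (m+2) * c1 l1 l2, -1:] + of_nat (2*m+2) * [:l1:])
      * ([:of_nat (m+2) * c1 l1 l2, -1:] + of_nat (2*m+2) * [:l2:]) * linear_rem l1 l2 m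
    - smult (centre_factor l1 l2 m) (linear_rem l1 l2 (Suc m))
    = quad_divisor l1 l2
      * [:of_nat (m+1) * c1 l1 l2 - of_nat (2*m+1) * (l1 + l2), - of_nat (2*m+1):]"
  by (rule poly_eq_poly_eq_iff[THEN iffD1], rule ext)
     (simp add: linear_rem_def quad_divisor_def centre_factor_def c1_def c2_def
      algebra_simps power2_eq_square)

lemma quad_divisor_dvd_shifted_P0:
  fixes l1 l2 :: "'a::{idom,ring_char_0}"
  shows "quad_divisor l1 l2 dvd shifted_P0 l1 l2 m - smult (P_centre l1 l2 m) (linear_rem l1 l2 m)"
proof (induction m)
  case 0
  then show ?case by (simp add: shifted_P0_def P_centre_def linear_rem_def P0_def)
next
  case (Suc m)
  define F where "F = ([:of_nat (m+2) * c1 l1 l2, -1:] + of_nat (2*m+2) * [:l1:])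
      * ([:of_nat (m+2) * c1 l1 l2, -1:] + of_nat (2*m+2) * [:l2:])"
  have "shifted_P0 l1 l2 (Suc m) = F * shifted_P0 l1 l2 m"
    unfolding F_def by (rule shifted_P0_Suc)
  then have "shifted_P0 l1 l2 (Suc m) - smult (P_centre l1 l2 (Suc m)) (linear_rem l1 l2 (Suc m))
      = F * (shifted_P0 l1 l2 m - smult (P_centre l1 l2 m) (linear_rem l1 l2 m))
        + smult (P_centre l1 l2 m)
            (F * linear_rem l1 l2 m - smult (centre_factor l1 l2 m) (linear_rem l1 l2 (Suc m)))"
    by (simp add: P_centre_Suc algebra_simps smult_add_right smult_diff_right)
  moreover have "quad_divisor l1 l2 dvd
      F * linear_rem l1 l2 m - smult (centre_factor l1 l2 m) (linear_rem l1 l2 (Suc m))"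
    unfolding F_def linear_rem_Suc_congruence by (rule dvd_triv_left)
  ultimately show ?case using Suc.IH by (metis dvd_add dvd_mult dvd_smult)
qed

lemma shifted_P0_mod:
  fixes l1 l2 :: "'a::field_char_0"
  shows "shifted_P0 l1 l2 m mod quad_divisor l1 l2 = smult (P_centre l1 l2 m) (linear_rem l1 l2 m)"
  by (rule mod_eq_of_dvd_diff[OF quad_divisor_dvd_shifted_P0])
     (simp add: quad_divisor_def linear_rem_def)

lemma X_times_shifted_P0_mod:
  fixes l1 l2 :: "'a::field_char_0"
  shows "(monom 1 1 * shifted_P0 l1 l2 m) mod quad_divisor l1 l2
    = smult (P_centre l1 l2 m) [:of_nat (2*m+1) * c2 l1 l2, - of_nat m * c1 l1 l2:]"
    (is "_ = ?r")
proof (rule mod_eq_of_dvd_diff)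
  have "monom 1 1 * smult (P_centre l1 l2 m) (linear_rem l1 l2 m) - ?r
      = smult (- P_centre l1 l2 m * of_nat (2*m+1)) (quad_divisor l1 l2)"
    by (rule poly_eq_poly_eq_iff[THEN iffD1], rule ext)
       (simp add: linear_rem_def quad_divisor_def poly_monom algebra_simps power2_eq_square)
  then have "monom 1 1 * shifted_P0 l1 l2 m - ?r
      = monom 1 1 * (shifted_P0 l1 l2 m - smult (P_centre l1 l2 m) (linear_rem l1 l2 m))
        + smult (- P_centre l1 l2 m * of_nat (2*m+1)) (quad_divisor l1 l2)"
    by (simp add: algebra_simps)
  then show "quad_divisor l1 l2 dvd monom 1 1 * shifted_P0 l1 l2 m - ?r"
    using quad_divisor_dvd_shifted_P0[of l1 l2 m] by (metis dvd_add dvd_mult dvd_smult dvd_refl)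
  show "degree ?r < degree (quad_divisor l1 l2)"
    by (simp add: quad_divisor_def degree_smult_le le_less_trans)
qed

theorem mainTheorem10:
  fixes l1 l2 :: "'a::field_char_0" and d :: nat
  assumes "odd d"
  shows "P0 l1 l2 (int d) (of_nat (d + 1) / 2 * c1 l1 l2)
           = (of_nat (d^2) * c2 l1 l2 - (of_nat (d^2) - 1) / 4 * (c1 l1 l2)^2)
             * P0 l1 l2 (int d - 2) (of_nat (d - 1) / 2 * c1 l1 l2)
       \<and> Rkj l1 l2 d 0 0 (of_nat (d + 1) / 2 * c1 l1 l2)
           = of_nat (d + 1) / 2 * c1 l1 l2 * P0 l1 l2 (int d - 2) (of_nat (d - 1) / 2 * c1 l1 l2)
       \<and> Rkj l1 l2 d 0 1 (of_nat (d + 1) / 2 * c1 l1 l2)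
           = - of_nat d * P0 l1 l2 (int d - 2) (of_nat (d - 1) / 2 * c1 l1 l2)
       \<and> Rkj l1 l2 d 1 0 (of_nat (d + 1) / 2 * c1 l1 l2)
           = of_nat d * c2 l1 l2 * P0 l1 l2 (int d - 2) (of_nat (d - 1) / 2 * c1 l1 l2)
       \<and> Rkj l1 l2 d 1 1 (of_nat (d + 1) / 2 * c1 l1 l2)
           = (1 - of_nat d) / 2 * c1 l1 l2 * P0 l1 l2 (int d - 2) (of_nat (d - 1) / 2 * c1 l1 l2)"
proof -
  obtain m where d: "d = 2*m+1" using assms oddE by blast
  have H: "of_nat (d + 1) / 2 * c1 l1 l2 = (of_nat (m+1) * c1 l1 l2 :: 'a)"
    by (simp add: d field_simps)
  have P_prev: "P0 l1 l2 (int d - 2) (of_nat (d - 1) / 2 * c1 l1 l2) = P_centre l1 l2 m"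
    by (simp add: d P_centre_def)
  have P_d: "P0 l1 l2 (int d) (of_nat (d + 1) / 2 * c1 l1 l2) = P_centre l1 l2 (Suc m)"
    unfolding H by (simp add: d P_centre_def)
  have R: "Rkj l1 l2 d k j (of_nat (d + 1) / 2 * c1 l1 l2)
      = coeff ((monom 1 k * shifted_P0 l1 l2 m) mod quad_divisor l1 l2) j" for k j
    unfolding Rkj_def H by (simp add: shifted_P0_def quad_divisor_def d)
  have factor: "centre_factor l1 l2 m
      = of_nat (d^2) * c2 l1 l2 - (of_nat (d^2) - 1) / 4 * (c1 l1 l2)^2"
    by (simp add: centre_factor_def d field_simps power2_eq_square)
  have mod0: "(monom 1 0 * shifted_P0 l1 l2 m) mod quad_divisor l1 l2
      = smult (P_centre l1 l2 m) (linear_rem l1 l2 m)"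
    by (simp add: shifted_P0_mod)
  show ?thesis
    unfolding P_prev P_d R P_centre_Suc factor mod0 X_times_shifted_P0_mod
    by (simp add: linear_rem_def d field_simps)
qed

end
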